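(* Let $(R,\Lambda,S)$ be a generalised Renner–Coxeter system with unit group $W$. For every $r\in R$: (i) there exists a unique triple $(w_1,e,w_2)$ with $e\in\Lambda$, $w_1$ the element of minimal length of the coset $w_1W_\star(e)$, $w_2$ the element of minimal length of the coset $W(e)w_2$, such that $r=w_1ew_2$; (ii) there exists a unique triple $(v_1,e,v_2)$ with $e\in\Lambda$, $v_1$ the element of minimal length of $v_1W(e)$, $v_2$ the element of minimal length of $W_\star(e)v_2$, such that $r=v_1ev_2$.
   Context: For a monoid $R$, $E(R)$ is its set of idempotents, $G(R)$ its unit group. $R$ is factorisable if $R=E(R)G(R)=G(R)E(R)$ and idempotents commute; then $E(R)$ is a semilattice ($e\le f\iff ef=fe=e$) on which $G(R)$ acts by conjugation. For $e\in E(R)$, $W(e)=\{w\in G(R)\mid we=ew\}$, $W_\star(e)=\{w\mid we=ew=e\}$. For a Coxeter system $(W,S)$, $W_I$ is the subgroup generated by $I\subseteq S$ and lengths are Coxeter lengths (each coset of a standard parabolic subgroup has a unique element of minimal length). A generalised Renner–Coxeter system is a triple $(R,\Lambda,S)$ with: (ECS1) $R$ factorisable; (ECS2) $\Lambda\subseteq E(R)$ contains exactly one element of each $G(R)$-orbit and is closed under multiplication; (ECS3) $(G(R),S)$ is a Coxeter system; (ECS4) for $e_1\le e_2$ in $E(R)$ there are $w\in G(R)$, $f_1\le f_2$ in $\Lambda$ with $wf_iw^{-1}=e_i$; (ECS5) for $e\in\Lambda$, $W(e)$, $W_\star(e)$ are of the form $W_I$; (ECS6) with $\lambda^\star(e)=\{s\in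 S\mid se=es\ne e\}$, $e\le f$ in $\Lambda$ implies $\lambda^\star(e)\subseteq\lambda^\star(f)$. $W=G(R)$. *)

theory Defs
  imports Main
begin

text \<open>The monoid R is the type 'a of class monoid_mult (R = UNIV).\<close>

definition idempotents :: "'a::monoid_mult set" ("E\<^sub>R") where
  "idempotents = {e. e * e = e}"

definition units :: "'a::monoid_mult set" ("G\<^sub>R") where
  "units = {u. \<exists>v. u * v = 1 \<and> v * u = 1}"

definition unit_inv :: "'a::monoid_mult \<Rightarrow> 'a" where
  "unit_inv u = (THE v. u * v = 1 \<and> v * u = 1)"

definition idem_le :: "'a::monoid_mult \<Rightarrow> 'a \<Rightarrow> bool" where
  "idem_le e f \<longleftrightarrow> e * f = e \<and> f * e = e"

definition factorisable :: "'a::monoid_mult itself \<Rightarrow> bool" where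
  "factorisable _ \<longleftrightarrow>
     (UNIV :: 'a set) = {e * g | e g. e \<in> idempotents \<and> g \<in> units} \<and>
     (UNIV :: 'a set) = {g * e | e g. e \<in> idempotents \<and> g \<in> units} \<and>
     (\<forall>e\<in>(idempotents :: 'a set). \<forall>f\<in>idempotents. e * f = f * e)"

definition W_of :: "'a::monoid_mult \<Rightarrow> 'a set" where
  "W_of e = {w \<in> units. w * e = e * w}"

definition Wstar_of :: "'a::monoid_mult \<Rightarrow> 'a set" where
  "Wstar_of e = {w \<in> units. w * e = e \<and> e * w = e}"

text \<open>Relators of the Coxeter presentation: (s t)^m for s, t in S and m the
  order of s t (any positive k with (st)^k = 1; these are consequences of
  the one with k = m). For s = t, k = 1 gives s s = 1.\<close>
definition cox_relators :: "'a::monoid_mult set \<Rightarrow> 'a list set" where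
  "cox_relators S = {concat (replicate k [s, t]) | s t k.
       s \<in> S \<and> t \<in> S \<and> 0 < k \<and> (s * t) ^ k = 1}"

inductive cox_equiv :: "'a::monoid_mult set \<Rightarrow> 'a list \<Rightarrow> 'a list \<Rightarrow> bool"
  for S where
  refl: "cox_equiv S xs xs"
| sym: "cox_equiv S xs ys \<Longrightarrow> cox_equiv S ys xs"
| trans: "cox_equiv S xs ys \<Longrightarrow> cox_equiv S ys zs \<Longrightarrow> cox_equiv S xs zs"
| rel: "r \<in> cox_relators S \<Longrightarrow> cox_equiv S (xs @ r @ ys) (xs @ ys)"

text \<open>(G(R), S) is a Coxeter system: S is a set of involutions (different from 1)
  generating the unit group, and the unit group is presented by the generators S
  subject to the relations (st)^{m(s,t)} = 1, i.e. every word over S whose product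
  is 1 is a consequence of the Coxeter relations.\<close>
definition coxeter_system :: "'a::monoid_mult set \<Rightarrow> 'a set \<Rightarrow> bool" where
  "coxeter_system W S \<longleftrightarrow>
     S \<subseteq> W \<and> (\<forall>s\<in>S. s \<noteq> 1 \<and> s * s = 1) \<and>
     (\<forall>w\<in>W. \<exists>ws. set ws \<subseteq> S \<and> prod_list ws = w) \<and>
     (\<forall>ws. set ws \<subseteq> S \<longrightarrow> prod_list ws \<in> W) \<and>
     (\<forall>ws. set ws \<subseteq> S \<and> prod_list ws = 1 \<longrightarrow> cox_equiv S ws [])"

definition cox_length :: "'a::monoid_mult set \<Rightarrow> 'a \<Rightarrow> nat" where
  "cox_length S w = (LEAST n. \<exists>ws. length ws = n \<and> set ws \<subseteq> S \<and> prod_list ws = w)"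

definition parabolic :: "'a::monoid_mult set \<Rightarrow> 'a set" where
  "parabolic I = {prod_list ws | ws. set ws \<subseteq> I}"

definition min_left_coset :: "'a::monoid_mult set \<Rightarrow> 'a \<Rightarrow> 'a set \<Rightarrow> bool" where
  "min_left_coset S w H \<longleftrightarrow>
     (\<forall>x \<in> (\<lambda>h. w * h) ` H. x \<noteq> w \<longrightarrow> cox_length S w < cox_length S x)"

definition min_right_coset :: "'a::monoid_mult set \<Rightarrow> 'a \<Rightarrow> 'a set \<Rightarrow> bool" where
  "min_right_coset S w H \<longleftrightarrow>
     (\<forall>x \<in> (\<lambda>h. h * w) ` H. x \<noteq> w \<longrightarrow> cox_length S w < cox_length S x)"

definition lambda_star :: "'a::monoid_mult set \<Rightarrow> 'a \<Rightarrow> 'a set" where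
  "lambda_star S e = {s \<in> S. s * e = e * s \<and> s * e \<noteq> e}"

definition gen_renner_coxeter :: "'a::monoid_mult set \<Rightarrow> 'a set \<Rightarrow> bool" where
  "gen_renner_coxeter \<Lambda> S \<longleftrightarrow>
     factorisable TYPE('a) \<and>
     \<Lambda> \<subseteq> idempotents \<and>
     (\<forall>e\<in>idempotents. \<exists>!f. f \<in> \<Lambda> \<and> (\<exists>w\<in>units. w * f * unit_inv w = e)) \<and>
     (\<forall>a\<in>\<Lambda>. \<forall>b\<in>\<Lambda>. a * b \<in> \<Lambda>) \<and>
     coxeter_system units S \<and>
     (\<forall>e1\<in>idempotents. \<forall>e2\<in>idempotents. idem_le e1 e2 \<longrightarrow>
        (\<exists>w\<in>units. \<exists>f1\<in>\<Lambda>. \<exists>f2\<in>\<Lambda>. idem_le f1 f2 \<and>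
           w * f1 * unit_inv w = e1 \<and> w * f2 * unit_inv w = e2)) \<and>
     (\<forall>e\<in>\<Lambda>. (\<exists>I\<subseteq>S. W_of e = parabolic I) \<and> (\<exists>J\<subseteq>S. Wstar_of e = parabolic J)) \<and>
     (\<forall>e\<in>\<Lambda>. \<forall>f\<in>\<Lambda>. idem_le e f \<longrightarrow> lambda_star S e \<subseteq> lambda_star S f)"

end

theory Submission
  imports Defs
begin

text \<open>Factorisability and ECS2 write every \<open>r\<close> as \<open>w f u\<close> with \<open>f \<in> \<Lambda>\<close> and units \<open>w, u\<close>. Since \<open>W(f)\<close>
  and \<open>W\<^sub>\<star>(f)\<close> are standard parabolic subgroups, \<open>u = h u\<^sub>2\<close> with \<open>h \<in> W(f)\<close> and \<open>u\<^sub>2\<close> minimal in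
  \<open>W(f) u\<^sub>2\<close>, and \<open>w h = u\<^sub>1 k\<close> with \<open>k \<in> W\<^sub>\<star>(f)\<close> and \<open>u\<^sub>1\<close> minimal in \<open>u\<^sub>1 W\<^sub>\<star>(f)\<close>; as \<open>h\<close> commutes
  with \<open>f\<close> and \<open>k f = f\<close>, \<open>r = u\<^sub>1 f u\<^sub>2\<close>. For uniqueness, \<open>w\<^sub>1 e w\<^sub>2 = w\<^sub>1' e' w\<^sub>2'\<close> yields
  \<open>e = a e' b\<close> with units \<open>a, b\<close>, and ECS2 and ECS4 force \<open>e' = e\<close>, \<open>a \<in> W(e)\<close>, \<open>a b \<in> W\<^sub>\<star>(e)\<close>;
  minimality of the coset representatives then pins down \<open>a\<close> and \<open>b\<close>.

  Minimal coset representatives are strictly shortest, which needs the exchange condition; it is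
  derived from the Coxeter presentation through Tits' reflection cocycle, whose invariance under
  the Coxeter relations makes it a function on the group.\<close>

lemma unit_inv_unique: "(u::'a::monoid_mult) * v = 1 \<Longrightarrow> v * u = 1 \<Longrightarrow> unit_inv u = v"
  unfolding unit_inv_def
proof (rule the_equality)
  fix v' assume "u * v' = 1 \<and> v' * u = 1"
  moreover assume "u * v = 1"
  ultimately have "v' = (v' * u) * v" by (metis mult.assoc mult_1_right)
  thus "v' = v" using \<open>u * v' = 1 \<and> v' * u = 1\<close> by simp
qed simp

lemma unit_inv_right [simp]: "u \<in> units \<Longrightarrow> u * unit_inv u = 1"
  and unit_inv_left [simp]: "u \<in> units \<Longrightarrow> unit_inv u * u = 1"
  unfolding units_def by (auto dest: unit_inv_unique)

lemma unit_inv_mult_cancel_left [simp]: "u \<in> units \<Longrightarrow> unit_inv u * (u * x) = x"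
  and mult_unit_inv_cancel_left [simp]: "u \<in> units \<Longrightarrow> u * (unit_inv u * x) = x"
  and mult_unit_inv_cancel_right [simp]: "u \<in> units \<Longrightarrow> x * u * unit_inv u = x"
  and mult_unit_inv_cancel_right' [simp]: "u \<in> units \<Longrightarrow> x * unit_inv u * u = x"
  by (simp_all flip: mult.assoc) (simp_all add: mult.assoc)

lemma one_in_units [simp]: "1 \<in> units"
  unfolding units_def by auto

lemma unit_inv_1 [simp]: "unit_inv 1 = 1"
  by (rule unit_inv_unique) simp_all

lemma unit_inv_in_units: "u \<in> units \<Longrightarrow> unit_inv u \<in> units"
  using unit_inv_left unit_inv_right units_def by blast

lemma unit_inv_unit_inv [simp]: "u \<in> units \<Longrightarrow> unit_inv (unit_inv u) = u"
  by (rule unit_inv_unique) simp_all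

lemma units_mult_closed: "u \<in> units \<Longrightarrow> v \<in> units \<Longrightarrow> u * v \<in> units"
proof -
  assume "u \<in> units" "v \<in> units"
  hence "(u * v) * (unit_inv v * unit_inv u) = 1" "(unit_inv v * unit_inv u) * (u * v) = 1"
    by (simp_all add: mult.assoc)
  thus ?thesis unfolding units_def by blast
qed

lemma mult_unit_right_cancel: "u \<in> units \<Longrightarrow> a * u = b * u \<longleftrightarrow> a = b"
  by (metis mult_unit_inv_cancel_right)

lemma mult_unit_left_cancel: "u \<in> units \<Longrightarrow> u * a = u * b \<longleftrightarrow> a = b"
  by (metis unit_inv_mult_cancel_left)

definition remove_nth :: "nat \<Rightarrow> 'a list \<Rightarrow> 'a list" where
  "remove_nth j xs = take j xs @ drop (Suc j) xs"

lemma set_remove_nth: "set (remove_nth j xs) \<subseteq> set xs"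
  by (auto simp: remove_nth_def dest: in_set_takeD in_set_dropD)

lemma length_remove_nth_less: "j < length xs \<Longrightarrow> length (remove_nth j xs) < length xs"
  by (simp add: remove_nth_def)

lemma remove_nth_append:
  "remove_nth j (xs @ ys) =
     (if j < length xs then remove_nth j xs @ ys else xs @ remove_nth (j - length xs) ys)"
  by (simp add: remove_nth_def Suc_diff_le)

fun odd_count :: "(nat \<Rightarrow> bool) \<Rightarrow> nat \<Rightarrow> bool" where
  "odd_count P 0 = False"
| "odd_count P (Suc n) = (odd_count P n \<noteq> P n)"

lemma odd_count_add: "odd_count P (m + n) = (odd_count P m \<noteq> odd_count (\<lambda>j. P (m + j)) n)"
  by (induction n) auto

lemma odd_count_Suc_shift: "odd_count P (Suc n) = (P 0 \<noteq> odd_count (\<lambda>j. P (Suc j)) n)"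
  using odd_count_add[of P 1 n] by simp

text \<open>Tits' reflection cocycle: \<open>reflection_parity [s\<^sub>1, \<dots>, s\<^sub>n] t\<close> is the parity of the number
  of \<open>i\<close> with \<open>s\<^sub>1 \<cdots> s\<^sub>i \<cdots> s\<^sub>1 = t\<close>.\<close>
fun reflection_parity :: "'a::monoid_mult list \<Rightarrow> 'a \<Rightarrow> bool" where
  "reflection_parity [] t = False"
| "reflection_parity (s # ws) t = ((t = s) \<noteq> reflection_parity ws (s * t * s))"

lemma reflection_parity_append:
  "reflection_parity (xs @ ys) t =
     (reflection_parity xs t \<noteq> reflection_parity ys (prod_list (rev xs) * t * prod_list xs))"
  by (induction xs arbitrary: t) (auto simp: mult.assoc)

lemma prod_list_alternating: "prod_list (concat (replicate n [s, t])) = (s * t :: 'a::monoid_mult) ^ n"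
  by (induction n) (auto simp: mult.assoc)

lemma parabolic_word: "h \<in> parabolic I \<longleftrightarrow> (\<exists>gs. set gs \<subseteq> I \<and> h = prod_list gs)"
  unfolding parabolic_def by blast

lemma prod_list_in_parabolic: "set gs \<subseteq> I \<Longrightarrow> prod_list gs \<in> parabolic I"
  unfolding parabolic_def by blast

locale coxeter_presentation =
  fixes S :: "'a::monoid_mult set"
  assumes involution: "s \<in> S \<Longrightarrow> s * s = 1"
    and relations_complete: "set ws \<subseteq> S \<Longrightarrow> prod_list ws = 1 \<Longrightarrow> cox_equiv S ws []"
begin

lemma involution_cancel [simp]: "s \<in> S \<Longrightarrow> s * (s * a) = a"
  by (simp add: mult.assoc[symmetric] involution)

lemma prod_list_mult_rev: "set ws \<subseteq> S \<Longrightarrow> prod_list ws * prod_list (rev ws) = 1"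
proof (induction ws)
  case (Cons s ws)
  hence "prod_list ws * (prod_list (rev ws) * s) = s" by (simp flip: mult.assoc)
  thus ?case using Cons by (simp add: mult.assoc involution)
qed simp

lemma unit_inv_prod_list: "set ws \<subseteq> S \<Longrightarrow> unit_inv (prod_list ws) = prod_list (rev ws)"
  by (rule unit_inv_unique) (use prod_list_mult_rev[of ws] prod_list_mult_rev[of "rev ws"] in auto)

lemma prod_list_in_units: "set ws \<subseteq> S \<Longrightarrow> prod_list ws \<in> units"
  using prod_list_mult_rev[of ws] prod_list_mult_rev[of "rev ws"] unfolding units_def by auto

lemma prod_list_rev_eq:
  "set xs \<subseteq> S \<Longrightarrow> set ys \<subseteq> S \<Longrightarrow> prod_list xs = prod_list ys \<Longrightarrow> prod_list (rev xs) = prod_list (rev ys)"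
  using unit_inv_prod_list by metis

lemma reflection_parity_alternating:
  assumes s: "s \<in> S" and t: "t \<in> S"
  shows "reflection_parity (concat (replicate n [s, t])) z =
           odd_count (\<lambda>j. z = (s * t) ^ j * s) (2 * n)"
proof (induction n arbitrary: z)
  case (Suc n)
  let ?x = "s * t"
  have conj_s: "(s * z * s = t) = (z = ?x ^ 1 * s)"
  proof
    assume "s * z * s = t"
    hence "s * (s * z * s) * s = s * t * s" by simp
    thus "z = ?x ^ 1 * s" using s by (simp add: mult.assoc involution)
  qed (use s in \<open>simp add: mult.assoc involution\<close>)
  have conj_ts: "(t * s * z * (s * t) = ?x ^ j * s) = (z = ?x ^ Suc (Suc j) * s)" for j
  proof -
    have "?x ^ Suc (Suc j) * s = s * t * (?x ^ j * s) * (t * s)"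
      by (simp add: mult.assoc power_commutes[symmetric])
    moreover have "s * t * (t * s * z * (s * t)) * (t * s) = z"
      using s t by (simp add: mult.assoc involution)
    moreover have "t * s * (s * t * y * (t * s)) * (s * t) = y" for y
      using s t by (simp add: mult.assoc involution)
    ultimately show ?thesis by (metis (no_types))
  qed
  have "reflection_parity (concat (replicate (Suc n) [s, t])) z
      = (((z = s) \<noteq> (s * z * s = t)) \<noteq>
           reflection_parity (concat (replicate n [s, t])) (t * s * z * (s * t)))"
    by (auto simp: reflection_parity_append mult.assoc)
  also have "\<dots> = (((z = ?x ^ 0 * s) \<noteq> (z = ?x ^ 1 * s)) \<noteq>
                   odd_count (\<lambda>j. z = ?x ^ Suc (Suc j) * s) (2 * n))"
    using Suc conj_s conj_ts by simp
  also have "\<dots> = odd_count (\<lambda>j. z = ?x ^ j * s) (2 * Suc n)"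
    by (auto simp: odd_count_Suc_shift simp del: odd_count.simps(2))
  finally show ?case .
qed simp

lemma relator_reflection_parity:
  assumes "r \<in> cox_relators S"
  shows "set r \<subseteq> S" and "prod_list r = 1" and "\<not> reflection_parity r z"
proof -
  obtain s t k where r: "r = concat (replicate k [s, t])" and st: "s \<in> S" "t \<in> S"
    and k: "(s * t) ^ k = 1"
    using assms unfolding cox_relators_def by blast
  show "set r \<subseteq> S" using r st by auto
  show "prod_list r = 1" using r k by (simp add: prod_list_alternating)
  have "(\<lambda>j. z = (s * t) ^ (k + j) * s) = (\<lambda>j. z = (s * t) ^ j * s)"
    using k by (simp add: power_add)
  hence "\<not> odd_count (\<lambda>j. z = (s * t) ^ j * s) (k + k)"
    by (simp add: odd_count_add)
  thus "\<not> reflection_parity r z"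
    using r reflection_parity_alternating[OF st, of k z] by (simp add: mult_2)
qed

lemma cox_equiv_reflection_parity:
  "cox_equiv S xs ys \<Longrightarrow> reflection_parity xs = reflection_parity ys"
proof (induction rule: cox_equiv.induct)
  case (rel r xs ys)
  have "prod_list (rev r) = 1"
    using prod_list_mult_rev[OF relator_reflection_parity(1)[OF rel]]
      relator_reflection_parity(2)[OF rel] by simp
  thus ?case using relator_reflection_parity(2,3)[OF rel]
    by (auto simp: reflection_parity_append mult.assoc)
qed auto

lemma reflection_parity_eq:
  assumes xs: "set xs \<subseteq> S" and ys: "set ys \<subseteq> S" and eq: "prod_list xs = prod_list ys"
  shows "reflection_parity xs = reflection_parity ys"
proof
  fix t
  have cancel: "\<not> reflection_parity (ws @ rev ys) t" if "set ws \<subseteq> S" "prod_list ws = prod_list ys" for ws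
  proof -
    have "cox_equiv S (ws @ rev ys) []"
      using that ys prod_list_mult_rev[OF ys] by (intro relations_complete) auto
    thus ?thesis using cox_equiv_reflection_parity by fastforce
  qed
  from cancel[OF xs eq] cancel[OF ys HOL.refl] show "reflection_parity xs t = reflection_parity ys t"
    using prod_list_rev_eq[OF xs ys eq] eq by (simp add: reflection_parity_append)
qed

lemma cox_length_le: "set ws \<subseteq> S \<Longrightarrow> cox_length S (prod_list ws) \<le> length ws"
  unfolding cox_length_def by (rule Least_le) auto

lemma ex_reduced_word:
  assumes "set ws \<subseteq> S"
  shows "\<exists>rs. set rs \<subseteq> S \<and> prod_list rs = prod_list ws \<and> length rs = cox_length S (prod_list ws)"
proof -
  let ?P = "\<lambda>n. \<exists>rs. length rs = n \<and> set rs \<subseteq> S \<and> prod_list rs = prod_list ws"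
  have "?P (LEAST n. ?P n)" by (rule LeastI[of ?P "length ws"]) (use assms in blast)
  thus ?thesis unfolding cox_length_def by blast
qed

lemma cox_length_rev: "set ws \<subseteq> S \<Longrightarrow> cox_length S (prod_list (rev ws)) = cox_length S (prod_list ws)"
proof -
  have le: "cox_length S (prod_list (rev ws)) \<le> cox_length S (prod_list ws)" if ws: "set ws \<subseteq> S" for ws
  proof -
    obtain rs where rs: "set rs \<subseteq> S" "prod_list rs = prod_list ws"
        "length rs = cox_length S (prod_list ws)"
      using ex_reduced_word[OF ws] by blast
    have "prod_list (rev ws) = prod_list (rev rs)"
      using prod_list_rev_eq[OF ws rs(1)] rs(2) by simp
    thus ?thesis using cox_length_le[of "rev rs"] rs by simp
  qed
  assume "set ws \<subseteq> S"
  thus ?thesis using le[of ws] le[of "rev ws"] by simp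
qed

lemma deletion_condition:
  "set ws \<subseteq> S \<Longrightarrow> reflection_parity ws t \<Longrightarrow>
     \<exists>j < length ws. t * prod_list ws = prod_list (remove_nth j ws)"
proof (induction ws arbitrary: t)
  case (Cons s ws)
  show ?case
  proof (cases "t = s")
    case True
    then show ?thesis using Cons.prems by (intro exI[of _ 0]) (simp add: remove_nth_def)
  next
    case False
    then obtain j where j: "j < length ws" "s * t * s * prod_list ws = prod_list (remove_nth j ws)"
      using Cons by auto
    have "t * prod_list (s # ws) = s * (s * t * s * prod_list ws)"
      using Cons.prems by (simp add: mult.assoc)
    also have "\<dots> = prod_list (remove_nth (Suc j) (s # ws))"
      using j by (simp add: remove_nth_def)
    finally show ?thesis using j by (intro exI[of _ "Suc j"]) simp
  qed
qed simp

lemma exchange_condition: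
  assumes s: "s \<in> S" and ws: "set ws \<subseteq> S"
    and le: "cox_length S (s * prod_list ws) \<le> cox_length S (prod_list ws)"
  shows "\<exists>j < length ws. s * prod_list ws = prod_list (remove_nth j ws)"
proof -
  have "reflection_parity ws s"
  proof (rule ccontr)
    assume "\<not> reflection_parity ws s"
    hence parity: "reflection_parity (s # ws) s" using s by (simp add: mult.assoc)
    obtain rs where rs: "set rs \<subseteq> S" "prod_list rs = s * prod_list ws"
        "length rs = cox_length S (s * prod_list ws)"
      using ex_reduced_word[of "s # ws"] s ws by auto
    have "reflection_parity rs s"
      using parity reflection_parity_eq[of rs "s # ws"] rs s ws by auto
    then obtain j where j: "j < length rs" "s * prod_list rs = prod_list (remove_nth j rs)"
      using deletion_condition rs(1) by blast
    have "cox_length S (prod_list ws) \<le> length (remove_nth j rs)"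
      using j rs s cox_length_le[of "remove_nth j rs"] set_remove_nth[of j rs] by auto
    also have "\<dots> < length rs" using j by (simp add: length_remove_nth_less)
    finally show False using rs(3) le by simp
  qed
  thus ?thesis using deletion_condition ws by blast
qed

lemma cox_length_reduced_parabolic_mult:
  assumes I: "I \<subseteq> S" and us: "set us \<subseteq> S" "length us = cox_length S (prod_list us)"
    and us_min: "\<And>gs. set gs \<subseteq> I \<Longrightarrow>
      cox_length S (prod_list us) \<le> cox_length S (prod_list gs * prod_list us)"
    and hs: "set hs \<subseteq> I"
    and hs_reduced: "\<And>hs'. set hs' \<subseteq> I \<Longrightarrow> prod_list hs' = prod_list hs \<Longrightarrow> length hs \<le> length hs'"
  shows "cox_length S (prod_list hs * prod_list us) = length hs + cox_length S (prod_list us)"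
  using hs hs_reduced
proof (induction hs)
  case (Cons i js)
  let ?u = "prod_list us"
  have iI: "i \<in> I" and jsI: "set js \<subseteq> I" using Cons.prems by auto
  have iS: "i \<in> S" and jsS: "set js \<subseteq> S" using iI jsI I by auto
  have "length js \<le> length hs'" if "set hs' \<subseteq> I" "prod_list hs' = prod_list js" for hs'
    using Cons.prems(2)[of "i # hs'"] that iI by simp
  with Cons.IH jsI have IH: "cox_length S (prod_list js * ?u) = length js + cox_length S ?u"
    by blast
  have ws: "set (js @ us) \<subseteq> S" using jsS us by auto
  have upper: "cox_length S (prod_list (i # js) * ?u) \<le> Suc (length js) + cox_length S ?u"
    using cox_length_le[of "i # js @ us"] ws iS us(2) by (simp add: mult.assoc)
  have "\<not> cox_length S (i * prod_list (js @ us)) \<le> cox_length S (prod_list (js @ us))"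
  proof
    assume "cox_length S (i * prod_list (js @ us)) \<le> cox_length S (prod_list (js @ us))"
    from exchange_condition[OF iS ws this] obtain j where j: "j < length (js @ us)"
      "i * prod_list (js @ us) = prod_list (remove_nth j (js @ us))" by blast
    show False
    proof (cases "j < length js")
      case True
      with j have "prod_list (i # js) * ?u = prod_list (remove_nth j js) * ?u"
        by (simp add: remove_nth_append mult.assoc)
      hence "prod_list (remove_nth j js) = prod_list (i # js)"
        using prod_list_in_units[OF us(1)] by (simp add: mult_unit_right_cancel)
      hence "length (i # js) \<le> length (remove_nth j js)"
        using Cons.prems(2) jsI set_remove_nth[of j js] by blast
      thus False using True length_remove_nth_less[of j js] by simp
    next
      case False
      define k where "k = j - length js"
      have k: "k < length us" using j False by (simp add: k_def)
      have "i * (prod_list js * ?u) = prod_list js * prod_list (remove_nth k us)"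
        using j False by (simp add: remove_nth_append k_def)
      hence "prod_list (rev js @ i # js) * ?u =
          prod_list (rev js) * prod_list js * prod_list (remove_nth k us)"
        by (simp add: mult.assoc)
      hence "prod_list (rev js @ i # js) * ?u = prod_list (remove_nth k us)"
        using prod_list_mult_rev[of "rev js"] jsS by simp
      hence "cox_length S ?u \<le> cox_length S (prod_list (remove_nth k us))"
        using us_min[of "rev js @ i # js"] jsI iI by auto
      also have "\<dots> \<le> length (remove_nth k us)"
        using cox_length_le[of "remove_nth k us"] us(1) set_remove_nth[of k us] by auto
      also have "\<dots> < length us" using k by (rule length_remove_nth_less)
      finally show False using us(2) by simp
    qed
  qed
  hence "Suc (length js) + cox_length S ?u \<le> cox_length S (prod_list (i # js) * ?u)"
    using IH by (simp add: mult.assoc)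
  thus ?case using upper by simp
qed simp

lemma ex_min_right_coset_word:
  assumes I: "I \<subseteq> S" and ws: "set ws \<subseteq> S"
  shows "\<exists>h\<in>parabolic I. \<exists>us. set us \<subseteq> S \<and> prod_list ws = h * prod_list us \<and>
           min_right_coset S (prod_list us) (parabolic I)"
proof -
  obtain g0 where g0: "set g0 \<subseteq> I" and g0_min: "\<And>gs. set gs \<subseteq> I \<Longrightarrow>
      cox_length S (prod_list g0 * prod_list ws) \<le> cox_length S (prod_list gs * prod_list ws)"
    using ex_has_least_nat[of "\<lambda>gs. set gs \<subseteq> I" "[]"
        "\<lambda>gs. cox_length S (prod_list gs * prod_list ws)"]
    by auto
  have g0S: "set g0 \<subseteq> S" using g0 I by auto
  obtain us where us: "set us \<subseteq> S" "prod_list us = prod_list (g0 @ ws)"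
      "length us = cox_length S (prod_list (g0 @ ws))"
    using ex_reduced_word[of "g0 @ ws"] g0S ws by auto
  have ws_eq: "prod_list ws = prod_list (rev g0) * prod_list us"
    using us(2) prod_list_mult_rev[of "rev g0"] g0S by (simp flip: mult.assoc)
  have us_min: "cox_length S (prod_list us) \<le> cox_length S (prod_list gs * prod_list us)"
    if "set gs \<subseteq> I" for gs
    using g0_min[of "gs @ g0"] that g0 us(2) by (simp add: mult.assoc)
  have "min_right_coset S (prod_list us) (parabolic I)"
  proof (unfold min_right_coset_def, intro ballI impI)
    fix x assume "x \<in> (\<lambda>h. h * prod_list us) ` parabolic I" and ne: "x \<noteq> prod_list us"
    then obtain gs where gs: "set gs \<subseteq> I" and x: "x = prod_list gs * prod_list us"
      by (auto simp: parabolic_word)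
    obtain hs where hs: "set hs \<subseteq> I \<and> prod_list hs = prod_list gs"
      and hs_min: "\<And>hs'. set hs' \<subseteq> I \<and> prod_list hs' = prod_list gs \<Longrightarrow> length hs \<le> length hs'"
      using ex_has_least_nat[of "\<lambda>hs. set hs \<subseteq> I \<and> prod_list hs = prod_list gs" gs length]
        gs
      by auto
    have "hs \<noteq> []" using hs ne x by auto
    moreover have "cox_length S x = length hs + cox_length S (prod_list us)"
      using cox_length_reduced_parabolic_mult[OF I us(1) _ us_min, of hs] hs hs_min x us(3) us(2)
      by auto
    ultimately show "cox_length S (prod_list us) < cox_length S x" by simp
  qed
  moreover have "prod_list (rev g0) \<in> parabolic I" using g0 by (simp add: prod_list_in_parabolic)
  ultimately show ?thesis using ws_eq us(1) by blast
qed

lemma min_left_coset_rev: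
  assumes I: "I \<subseteq> S" and us: "set us \<subseteq> S"
    and min: "min_right_coset S (prod_list us) (parabolic I)"
  shows "min_left_coset S (prod_list (rev us)) (parabolic I)"
proof (unfold min_left_coset_def, intro ballI impI)
  fix x assume "x \<in> (\<lambda>h. prod_list (rev us) * h) ` parabolic I" and ne: "x \<noteq> prod_list (rev us)"
  then obtain gs where gs: "set gs \<subseteq> I" and x: "x = prod_list (rev (rev gs @ us))"
    by (auto simp: parabolic_word)
  have gsS: "set gs \<subseteq> S" using gs I by auto
  have "prod_list (rev gs @ us) \<in> (\<lambda>h. h * prod_list us) ` parabolic I"
    using gs prod_list_in_parabolic[of "rev gs" I] by simp
  moreover have "prod_list (rev gs @ us) \<noteq> prod_list us"
    using ne x prod_list_rev_eq[of "rev gs @ us" us] gsS us by auto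
  ultimately have "cox_length S (prod_list us) < cox_length S (prod_list (rev gs @ us))"
    using min unfolding min_right_coset_def by blast
  thus "cox_length S (prod_list (rev us)) < cox_length S x"
    using x cox_length_rev[of "rev gs @ us"] cox_length_rev[OF us] gsS us by simp
qed

lemma ex_min_left_coset_word:
  assumes I: "I \<subseteq> S" and ws: "set ws \<subseteq> S"
  shows "\<exists>h\<in>parabolic I. \<exists>us. set us \<subseteq> S \<and> prod_list ws = prod_list us * h \<and>
           min_left_coset S (prod_list us) (parabolic I)"
proof -
  obtain hs us where hs: "set hs \<subseteq> I" and us: "set us \<subseteq> S"
    and eq: "prod_list (rev ws) = prod_list hs * prod_list us"
    and min: "min_right_coset S (prod_list us) (parabolic I)"
    using ex_min_right_coset_word[OF I, of "rev ws"] ws by (auto simp: parabolic_word)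
  have hsS: "set hs \<subseteq> S" using hs I by auto
  have "prod_list ws = prod_list (rev (hs @ us))"
    using prod_list_rev_eq[of "rev ws" "hs @ us"] ws hsS us eq by auto
  moreover have "prod_list (rev hs) \<in> parabolic I" using hs by (simp add: prod_list_in_parabolic)
  ultimately show ?thesis using min_left_coset_rev[OF I us min] us
    by (intro bexI[of _ "prod_list (rev hs)"] exI[of _ "rev us"]) auto
qed

end

lemma coxeter_system_presentation: "coxeter_system units S \<Longrightarrow> coxeter_presentation S"
  unfolding coxeter_system_def by unfold_locales auto

lemma ex_min_right_coset_rep:
  assumes "coxeter_system units S" and "I \<subseteq> S" and "w \<in> units"
  shows "\<exists>h\<in>parabolic I. \<exists>u\<in>units. w = h * u \<and> min_right_coset S u (parabolic I)"
proof -
  interpret coxeter_presentation S using assms(1) by (rule coxeter_system_presentation)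
  obtain ws where "set ws \<subseteq> S" "prod_list ws = w"
    using assms unfolding coxeter_system_def by blast
  thus ?thesis using ex_min_right_coset_word[OF assms(2)] prod_list_in_units by blast
qed

lemma ex_min_left_coset_rep:
  assumes "coxeter_system units S" and "I \<subseteq> S" and "w \<in> units"
  shows "\<exists>h\<in>parabolic I. \<exists>u\<in>units. w = u * h \<and> min_left_coset S u (parabolic I)"
proof -
  interpret coxeter_presentation S using assms(1) by (rule coxeter_system_presentation)
  obtain ws where "set ws \<subseteq> S" "prod_list ws = w"
    using assms unfolding coxeter_system_def by blast
  thus ?thesis using ex_min_left_coset_word[OF assms(2)] prod_list_in_units by blast
qed

lemma W_of_mult: "x \<in> W_of e \<Longrightarrow> y \<in> W_of e \<Longrightarrow> x * y \<in> W_of e"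
proof -
  assume x: "x \<in> W_of e" and y: "y \<in> W_of e"
  have "x * y * e = x * (e * y)" using y unfolding W_of_def by (simp add: mult.assoc)
  also have "\<dots> = e * (x * y)" using x unfolding W_of_def by (simp flip: mult.assoc)
  finally show ?thesis using x y unfolding W_of_def by (simp add: units_mult_closed)
qed

lemma W_of_unit_inv: "x \<in> W_of e \<Longrightarrow> unit_inv x \<in> W_of e"
proof -
  assume x: "x \<in> W_of e"
  hence "unit_inv x * (x * e) * unit_inv x = unit_inv x * (e * x) * unit_inv x"
    unfolding W_of_def by simp
  thus ?thesis using x unfolding W_of_def by (simp add: mult.assoc unit_inv_in_units)
qed

lemma Wstar_of_unit_inv: "x \<in> Wstar_of e \<Longrightarrow> unit_inv x \<in> Wstar_of e"
proof -
  assume "x \<in> Wstar_of e"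
  hence x: "x \<in> units" and xe: "x * e = e" "e * x = e" unfolding Wstar_of_def by auto
  have "unit_inv x * e = unit_inv x * (x * e)" using xe by simp
  also have "\<dots> = e" using x by simp
  moreover have "e * unit_inv x = e * x * unit_inv x" using xe by simp
  moreover have "\<dots> = e" using x by simp
  ultimately show ?thesis using x unfolding Wstar_of_def by (simp add: unit_inv_in_units)
qed

lemma Wstar_of_subset_W_of: "Wstar_of e \<subseteq> W_of e"
  unfolding W_of_def Wstar_of_def by auto

lemma min_left_coset_eq:
  assumes "min_left_coset S x H" "min_left_coset S y H"
    and "y \<in> (\<lambda>h. x * h) ` H" "x \<in> (\<lambda>h. y * h) ` H"
  shows "x = y"
proof (rule ccontr)
  assume "x \<noteq> y"
  with assms have "cox_length S x < cox_length S y" "cox_length S y < cox_length S x"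
    unfolding min_left_coset_def by auto
  thus False by simp
qed

lemma min_right_coset_eq:
  assumes "min_right_coset S x H" "min_right_coset S y H"
    and "y \<in> (\<lambda>h. h * x) ` H" "x \<in> (\<lambda>h. h * y) ` H"
  shows "x = y"
proof (rule ccontr)
  assume "x \<noteq> y"
  with assms have "cox_length S x < cox_length S y" "cox_length S y < cox_length S x"
    unfolding min_right_coset_def by auto
  thus False by simp
qed

lemma ex1_tripleI:
  assumes "\<exists>x y z. P x y z"
    and "\<And>x y z x' y' z'. P x y z \<Longrightarrow> P x' y' z' \<Longrightarrow> (x, y, z) = (x', y', z')"
  shows "\<exists>!(x, y, z). P x y z"
proof -
  obtain x y z where p: "P x y z" using assms(1) by blast
  show ?thesis
  proof (rule ex1I[of _ "(x, y, z)"])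
    fix t assume "case t of (x, y, z) \<Rightarrow> P x y z"
    thus "t = (x, y, z)" using assms(2)[OF _ p] by (cases t) auto
  qed (simp add: p)
qed

locale renner_coxeter =
  fixes \<Lambda> S :: "'a::monoid_mult set"
  assumes factorisable: "factorisable TYPE('a)"
    and Lambda_idempotents: "\<Lambda> \<subseteq> idempotents"
    and Lambda_orbit_representatives:
      "e \<in> idempotents \<Longrightarrow> \<exists>!f. f \<in> \<Lambda> \<and> (\<exists>w\<in>units. w * f * unit_inv w = e)"
    and coxeter_system: "coxeter_system units S"
    and Lambda_conj_le: "e1 \<in> idempotents \<Longrightarrow> e2 \<in> idempotents \<Longrightarrow> idem_le e1 e2 \<Longrightarrow>
      \<exists>w\<in>units. \<exists>f1\<in>\<Lambda>. \<exists>f2\<in>\<Lambda>.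
        idem_le f1 f2 \<and> w * f1 * unit_inv w = e1 \<and> w * f2 * unit_inv w = e2"
    and parabolic_stabilisers:
      "e \<in> \<Lambda> \<Longrightarrow> (\<exists>I\<subseteq>S. W_of e = parabolic I) \<and> (\<exists>J\<subseteq>S. Wstar_of e = parabolic J)"

lemma gen_renner_coxeter_imp_renner_coxeter: "gen_renner_coxeter \<Lambda> S \<Longrightarrow> renner_coxeter \<Lambda> S"
  unfolding gen_renner_coxeter_def renner_coxeter_def Ball_def
  by (elim conjE) (intro conjI; blast)

context renner_coxeter
begin

lemma Lambda_idempotent: "e \<in> \<Lambda> \<Longrightarrow> e * e = e"
  using Lambda_idempotents unfolding idempotents_def by blast

lemma idempotents_commute:
  assumes "e * e = e" and "f * f = (f::'a)"
  shows "e * f = f * e"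
proof -
  have "\<forall>x\<in>idempotents. \<forall>y\<in>idempotents. x * y = y * (x::'a)"
    using factorisable unfolding factorisable_def by (elim conjE)
  moreover have "e \<in> idempotents" "f \<in> idempotents"
    using assms unfolding idempotents_def by simp_all
  ultimately show ?thesis by blast
qed

lemma Lambda_conj_unique:
  assumes "e \<in> idempotents" "f1 \<in> \<Lambda>" "f2 \<in> \<Lambda>" "w1 \<in> units" "w2 \<in> units"
    and "w1 * f1 * unit_inv w1 = e" "w2 * f2 * unit_inv w2 = e"
  shows "f1 = f2"
  using Lambda_orbit_representatives[OF assms(1)] assms by blast

lemma Lambda_conj_eq: "e \<in> \<Lambda> \<Longrightarrow> f \<in> \<Lambda> \<Longrightarrow> u \<in> units \<Longrightarrow> u * f * unit_inv u = e \<Longrightarrow> f = e"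
  using Lambda_conj_unique[of e f e u 1] Lambda_idempotent unfolding idempotents_def by simp

lemma idem_le_conj_eq:
  assumes e: "e \<in> \<Lambda>" and u: "u \<in> units" and le: "idem_le e (u * e * unit_inv u)"
  shows "u * e * unit_inv u = e"
proof -
  let ?g = "u * e * unit_inv u"
  have ee: "e * e = e" using Lambda_idempotent[OF e] .
  have "?g * ?g = u * (e * e) * unit_inv u" using u by (simp add: mult.assoc)
  hence gg: "?g * ?g = ?g" using ee by simp
  obtain w f1 f2 where w: "w \<in> units" and f: "f1 \<in> \<Lambda>" "f2 \<in> \<Lambda>"
    and conj: "w * f1 * unit_inv w = e" "w * f2 * unit_inv w = ?g"
    using Lambda_conj_le[OF _ _ le] ee gg unfolding idempotents_def by blast
  have "f1 = e"
    using Lambda_conj_unique[of e f1 e w 1] e ee f w conj unfolding idempotents_def by simp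
  moreover have "f2 = e"
    using Lambda_conj_unique[of ?g f2 e w u] e gg f w u conj unfolding idempotents_def by simp
  ultimately show ?thesis using conj by simp
qed

text \<open>\<open>f = a e' a\<^sup>-\<^sup>1\<close> is an idempotent with \<open>e f = f\<close> and \<open>f e = e\<close>, so \<open>f = e\<close> as idempotents
  commute, and ECS2 gives \<open>e' = e\<close>. Then \<open>c = a b\<close> satisfies \<open>e \<le> c\<^sup>-\<^sup>1 e c\<close>, which ECS4 together
  with ECS2 forces to be an equality.\<close>
lemma Lambda_two_sided_eq:
  assumes e: "e \<in> \<Lambda>" and e': "e' \<in> \<Lambda>" and a: "a \<in> units" and b: "b \<in> units"
    and eq: "e = a * e' * b"
  shows "e' = e \<and> a \<in> W_of e \<and> a * b \<in> Wstar_of e"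
proof -
  have ee: "e * e = e" and ee': "e' * e' = e'" using Lambda_idempotent e e' by auto
  define f where "f = a * e' * unit_inv a"
  have "f * f = a * (e' * e') * unit_inv a" using a by (simp add: f_def mult.assoc)
  hence ff: "f * f = f" using ee' by (simp add: f_def)
  have e_f: "e = f * (a * b)" using a eq by (simp add: f_def mult.assoc)
  have f_e: "f = e * unit_inv b * unit_inv a" using b eq by (simp add: f_def mult.assoc)
  have "e * f = f" using f_e ee by (simp flip: mult.assoc)
  moreover have "f * e = e"
  proof -
    have "f * e = f * f * (a * b)" using e_f by (simp add: mult.assoc)
    also have "\<dots> = e" using ff e_f by simp
    finally show ?thesis .
  qed
  ultimately have "f = e" using idempotents_commute[OF ee ff] by simp
  hence conj_a: "a * e' * unit_inv a = e" by (simp add: f_def)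
  hence "e' = e" by (rule Lambda_conj_eq[OF e e' a])
  from conj_a have "a * e * unit_inv a * a = e * a" unfolding \<open>e' = e\<close> by simp
  hence ae: "a * e = e * a" using a by simp
  define c where "c = a * b"
  have c: "c \<in> units" using a b by (simp add: c_def units_mult_closed)
  have "e * c = a * e * b" using ae by (simp add: c_def flip: mult.assoc)
  also have "\<dots> = e" by (rule eq[unfolded \<open>e' = e\<close>, symmetric])
  finally have ec: "e * c = e" .
  have "idem_le e (unit_inv c * e * unit_inv (unit_inv c))"
  proof -
    have "e * unit_inv c = e * c * unit_inv c" using ec by simp
    hence eci: "e * unit_inv c = e" using c by simp
    have "e * (unit_inv c * e * c) = e" using eci ec ee by (simp flip: mult.assoc)
    moreover have "unit_inv c * e * c * (unit_inv c * e * c) = unit_inv c * (e * e) * c"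
      using c by (simp add: mult.assoc)
    ultimately show ?thesis
      using idempotents_commute[OF ee] c ee unfolding idem_le_def by simp
  qed
  hence "unit_inv c * e * c = e"
    using idem_le_conj_eq[OF e unit_inv_in_units[OF c]] c by simp
  hence "c * (unit_inv c * e * c) = c * e" by simp
  hence "c * e = e * c" using c by (simp add: mult.assoc)
  hence "c \<in> Wstar_of e" using c ec unfolding Wstar_of_def by simp
  moreover have "a \<in> W_of e" using a ae unfolding W_of_def by simp
  ultimately show ?thesis using \<open>e' = e\<close> by (simp add: c_def)
qed

lemma ex_unit_Lambda_unit: "\<exists>w\<in>units. \<exists>f\<in>\<Lambda>. \<exists>u\<in>units. r = w * f * u"
proof -
  have "(UNIV::'a set) = {e * g | e g. e \<in> idempotents \<and> g \<in> units}"
    using factorisable unfolding factorisable_def by (elim conjE)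
  hence "r \<in> {e * g | e g. e \<in> idempotents \<and> g \<in> units}" by blast
  then obtain e g where r: "r = e * g" and e: "e \<in> idempotents" and g: "g \<in> units"
    by blast
  obtain f w where f: "f \<in> \<Lambda>" and w: "w \<in> units" and conj: "w * f * unit_inv w = e"
    using Lambda_orbit_representatives[OF e] by blast
  have "r = w * f * (unit_inv w * g)" unfolding r conj[symmetric] by (simp add: mult.assoc)
  thus ?thesis using f w g by (blast intro: units_mult_closed unit_inv_in_units)
qed

lemma ex_normal_form_Wstar_W:
  "\<exists>w1 e w2. e \<in> \<Lambda> \<and> w1 \<in> units \<and> w2 \<in> units \<and>
     min_left_coset S w1 (Wstar_of e) \<and> min_right_coset S w2 (W_of e) \<and> r = w1 * e * w2"
proof -
  obtain w f u where w: "w \<in> units" and f: "f \<in> \<Lambda>" and u: "u \<in> units" and r: "r = w * f * u"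
    using ex_unit_Lambda_unit by blast
  obtain I J where I: "I \<subseteq> S" "W_of f = parabolic I" and J: "J \<subseteq> S" "Wstar_of f = parabolic J"
    using parabolic_stabilisers[OF f] by blast
  obtain h u2 where h: "h \<in> W_of f" and u2: "u2 \<in> units" "u = h * u2"
    and min2: "min_right_coset S u2 (W_of f)"
    using ex_min_right_coset_rep[OF coxeter_system I(1) u] I(2) by auto
  have wh: "w * h \<in> units" using w h unfolding W_of_def by (simp add: units_mult_closed)
  obtain k u1 where k: "k \<in> Wstar_of f" and u1: "u1 \<in> units" "w * h = u1 * k"
    and min1: "min_left_coset S u1 (Wstar_of f)"
    using ex_min_left_coset_rep[OF coxeter_system J(1) wh] J(2) by auto
  have "r = w * (h * f) * u2" using r u2(2) h unfolding W_of_def by (simp add: mult.assoc)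
  also have "\<dots> = u1 * (k * f) * u2" using u1(2) by (simp flip: mult.assoc)
  also have "\<dots> = u1 * f * u2" using k unfolding Wstar_of_def by simp
  finally show ?thesis using f u1 u2 min1 min2 by blast
qed

lemma ex_normal_form_W_Wstar:
  "\<exists>v1 e v2. e \<in> \<Lambda> \<and> v1 \<in> units \<and> v2 \<in> units \<and>
     min_left_coset S v1 (W_of e) \<and> min_right_coset S v2 (Wstar_of e) \<and> r = v1 * e * v2"
proof -
  obtain w f u where w: "w \<in> units" and f: "f \<in> \<Lambda>" and u: "u \<in> units" and r: "r = w * f * u"
    using ex_unit_Lambda_unit by blast
  obtain I J where I: "I \<subseteq> S" "W_of f = parabolic I" and J: "J \<subseteq> S" "Wstar_of f = parabolic J"
    using parabolic_stabilisers[OF f] by blast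
  obtain h v1 where h: "h \<in> W_of f" and v1: "v1 \<in> units" "w = v1 * h"
    and min1: "min_left_coset S v1 (W_of f)"
    using ex_min_left_coset_rep[OF coxeter_system I(1) w] I(2) by auto
  have hu: "h * u \<in> units" using u h unfolding W_of_def by (simp add: units_mult_closed)
  obtain k v2 where k: "k \<in> Wstar_of f" and v2: "v2 \<in> units" "h * u = k * v2"
    and min2: "min_right_coset S v2 (Wstar_of f)"
    using ex_min_right_coset_rep[OF coxeter_system J(1) hu] J(2) by auto
  have "r = v1 * (h * f) * u" using r v1(2) by (simp add: mult.assoc)
  also have "\<dots> = v1 * (f * h) * u" using h unfolding W_of_def by simp
  also have "\<dots> = v1 * (f * k) * v2" using v2(2) by (simp add: mult.assoc)
  also have "\<dots> = v1 * f * v2" using k unfolding Wstar_of_def by simp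
  finally show ?thesis using f v1 v2 min1 min2 by blast
qed

lemma normal_form_change:
  assumes e: "e \<in> \<Lambda>" and e': "e' \<in> \<Lambda>"
    and units: "w1 \<in> units" "w2 \<in> units" "w1' \<in> units" "w2' \<in> units"
    and eq: "w1 * e * w2 = w1' * e' * w2'"
  obtains a b where "e' = e" "a \<in> W_of e" "b \<in> units" "a * b \<in> Wstar_of e"
    "w1' = w1 * a" "w2' = b * w2"
proof -
  define a where "a = unit_inv w1 * w1'"
  define b where "b = w2' * unit_inv w2"
  have a: "a \<in> units" and b: "b \<in> units"
    using units by (simp_all add: a_def b_def units_mult_closed unit_inv_in_units)
  have "e = unit_inv w1 * (w1 * e * w2) * unit_inv w2"
    using units by (simp add: mult.assoc)
  also have "\<dots> = a * e' * b" using eq by (simp add: a_def b_def mult.assoc)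
  finally have "e' = e \<and> a \<in> W_of e \<and> a * b \<in> Wstar_of e"
    by (rule Lambda_two_sided_eq[OF e e' a b])
  moreover have "w1' = w1 * a" "w2' = b * w2"
    using units by (simp_all add: a_def b_def mult.assoc)
  ultimately show ?thesis using b that by blast
qed

lemma normal_form_Wstar_W_unique:
  assumes "e \<in> \<Lambda>" "e' \<in> \<Lambda>" "w1 \<in> units" "w2 \<in> units" "w1' \<in> units" "w2' \<in> units"
    and min: "min_left_coset S w1 (Wstar_of e)" "min_right_coset S w2 (W_of e)"
    and min': "min_left_coset S w1' (Wstar_of e')" "min_right_coset S w2' (W_of e')"
    and eq: "w1 * e * w2 = w1' * e' * w2'"
  shows "(w1, e, w2) = (w1', e', w2')"
proof -
  obtain a b where ab: "e' = e" "a \<in> W_of e" "b \<in> units" "a * b \<in> Wstar_of e"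
      "w1' = w1 * a" "w2' = b * w2"
    using normal_form_change[OF assms(1-6) eq] .
  have a: "a \<in> units" using ab(2) unfolding W_of_def by simp
  have "unit_inv a * (a * b) \<in> W_of e"
    using W_of_mult[OF W_of_unit_inv[OF ab(2)]] ab(4) Wstar_of_subset_W_of by blast
  hence b: "b \<in> W_of e" using a by simp
  have "w2 = unit_inv b * w2'" using ab(3,6) by simp
  hence "w2 = w2'"
    using min_right_coset_eq[OF min(2)] min'(2) ab(1,6) b W_of_unit_inv[OF b] by auto
  hence "b = 1" using ab(6) assms(4) mult_unit_right_cancel[of w2 b 1] by simp
  hence "a \<in> Wstar_of e" using ab(4) by simp
  moreover have "w1 = w1' * unit_inv a" using ab(5) a by (simp add: mult.assoc)
  ultimately have "w1 = w1'"
    using min_left_coset_eq[OF min(1)] min'(1) ab(1,5) Wstar_of_unit_inv by auto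
  thus ?thesis using \<open>w2 = w2'\<close> ab(1) by simp
qed

lemma normal_form_W_Wstar_unique:
  assumes "e \<in> \<Lambda>" "e' \<in> \<Lambda>" "v1 \<in> units" "v2 \<in> units" "v1' \<in> units" "v2' \<in> units"
    and min: "min_left_coset S v1 (W_of e)" "min_right_coset S v2 (Wstar_of e)"
    and min': "min_left_coset S v1' (W_of e')" "min_right_coset S v2' (Wstar_of e')"
    and eq: "v1 * e * v2 = v1' * e' * v2'"
  shows "(v1, e, v2) = (v1', e', v2')"
proof -
  obtain a b where ab: "e' = e" "a \<in> W_of e" "b \<in> units" "a * b \<in> Wstar_of e"
      "v1' = v1 * a" "v2' = b * v2"
    using normal_form_change[OF assms(1-6) eq] .
  have a: "a \<in> units" using ab(2) unfolding W_of_def by simp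
  have "v1 = v1' * unit_inv a" using ab(5) a by (simp add: mult.assoc)
  hence "v1 = v1'"
    using min_left_coset_eq[OF min(1)] min'(1) ab(1,2,5) W_of_unit_inv[OF ab(2)] by auto
  hence "a = 1" using ab(5) assms(3) mult_unit_left_cancel[of v1 a 1] by simp
  hence "b \<in> Wstar_of e" using ab(4) by simp
  moreover have "v2 = unit_inv b * v2'" using ab(3,6) by simp
  ultimately have "v2 = v2'"
    using min_right_coset_eq[OF min(2)] min'(2) ab(1,6) Wstar_of_unit_inv by auto
  thus ?thesis using \<open>v1 = v1'\<close> ab(1) by simp
qed

end

theorem mainTheorem9:
  fixes \<Lambda> S :: "'a::monoid_mult set"
  assumes "gen_renner_coxeter \<Lambda> S"
  shows "\<forall>r::'a.
      (\<exists>!(w1, e, w2). e \<in> \<Lambda> \<and> w1 \<in> units \<and> w2 \<in> units \<and>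
          min_left_coset S w1 (Wstar_of e) \<and> min_right_coset S w2 (W_of e) \<and>
          r = w1 * e * w2) \<and>
      (\<exists>!(v1, e, v2). e \<in> \<Lambda> \<and> v1 \<in> units \<and> v2 \<in> units \<and>
          min_left_coset S v1 (W_of e) \<and> min_right_coset S v2 (Wstar_of e) \<and>
          r = v1 * e * v2)"
proof -
  interpret renner_coxeter \<Lambda> S using assms by (rule gen_renner_coxeter_imp_renner_coxeter)
  show ?thesis
  proof (intro allI conjI ex1_tripleI)
    fix r
    show "\<exists>w1 e w2. e \<in> \<Lambda> \<and> w1 \<in> units \<and> w2 \<in> units \<and>
        min_left_coset S w1 (Wstar_of e) \<and> min_right_coset S w2 (W_of e) \<and> r = w1 * e * w2"
      by (rule ex_normal_form_Wstar_W)
    show "\<exists>v1 e v2. e \<in> \<Lambda> \<and> v1 \<in> units \<and> v2 \<in> units \<and>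
        min_left_coset S v1 (W_of e) \<and> min_right_coset S v2 (Wstar_of e) \<and> r = v1 * e * v2"
      by (rule ex_normal_form_W_Wstar)
  qed (use normal_form_Wstar_W_unique normal_form_W_Wstar_unique in blast)+
qed

end
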